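(* Let $n\geq 2$. Let $\mathbf{P}\subseteq\mathbf{Q}$ be structures in $\mathcal{PO}_{n,<_1,\ldots,<_n}$ ($\mathbf{P}$ a substructure of $\mathbf{Q}$). If $f$ is an embedding of $\mathbf{P}$ into $\mathbf{D}_{n,<_1,\ldots,<_n}$, then there is an embedding $g$ of $\mathbf{Q}$ into $\mathbf{D}_{n,<_1,\ldots,<_n}$ which extends $f$.
   Context: Fix $n\geq 2$ and a set $D_n\subseteq\mathbb{Q}^n$ which is dense in $\mathbb{Q}^n$ (product topology) and such that no two distinct points of $D_n$ share a common coordinate. $\mathbf{D}_{n,<_1,\ldots,<_n}=(D_n,<,<_1,\ldots,<_n)$ where $<$ is the product order ($\mathbf{a}<\mathbf{b}$ iff $a_i\leq b_i$ for all $i$ and $\mathbf{a}\neq\mathbf{b}$) and $\mathbf{a}<_i\mathbf{b}$ iff $a_i<b_i$. $\mathcal{PO}_{n,<_1,\ldots,<_n}$ is the class of all finite structures $(P,<,<_1,\ldots,<_n)$ where $<_1,\ldots,<_n$ are strict linear orders on $P$ and $a<b$ iff $a<_ib$ for all $i\leq n$. Embeddings are injective maps preserving and reflecting each of $<,<_1,\ldots,<_n$; substructures carry the induced relations. *)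

theory Defs
  imports Main "HOL.Rat"
begin

text \<open>Points of Q^n are represented as functions nat => rat that vanish outside {..<n}.\<close>
definition rat_space :: "nat \<Rightarrow> (nat \<Rightarrow> rat) set" where
  "rat_space n = {x. \<forall>i\<ge>n. x i = 0}"

text \<open>Density of D in Q^n w.r.t. the product topology (Q with its order topology):
  D meets every nonempty basic open set, i.e. every product of open intervals.\<close>
definition dense_in_Qn :: "nat \<Rightarrow> (nat \<Rightarrow> rat) set \<Rightarrow> bool" where
  "dense_in_Qn n D \<longleftrightarrow>
     (\<forall>a b :: nat \<Rightarrow> rat. (\<forall>i<n. a i < b i) \<longrightarrow>
        (\<exists>d\<in>D. \<forall>i<n. a i < d i \<and> d i < b i))"

definition no_common_coord :: "nat \<Rightarrow> (nat \<Rightarrow> rat) set \<Rightarrow> bool" where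
  "no_common_coord n D \<longleftrightarrow>
     (\<forall>a\<in>D. \<forall>b\<in>D. a \<noteq> b \<longrightarrow> (\<forall>i<n. a i \<noteq> b i))"

definition prod_less :: "nat \<Rightarrow> (nat \<Rightarrow> rat) \<Rightarrow> (nat \<Rightarrow> rat) \<Rightarrow> bool" where
  "prod_less n a b \<longleftrightarrow> (\<forall>i<n. a i \<le> b i) \<and> a \<noteq> b"

definition coord_less :: "nat \<Rightarrow> (nat \<Rightarrow> rat) \<Rightarrow> (nat \<Rightarrow> rat) \<Rightarrow> bool" where
  "coord_less i a b \<longleftrightarrow> a i < b i"

definition strict_linear_on :: "'a set \<Rightarrow> ('a \<Rightarrow> 'a \<Rightarrow> bool) \<Rightarrow> bool" where
  "strict_linear_on A r \<longleftrightarrow>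
     (\<forall>x\<in>A. \<not> r x x) \<and>
     (\<forall>x\<in>A. \<forall>y\<in>A. \<forall>z\<in>A. r x y \<longrightarrow> r y z \<longrightarrow> r x z) \<and>
     (\<forall>x\<in>A. \<forall>y\<in>A. x \<noteq> y \<longrightarrow> r x y \<or> r y x)"

text \<open>(A, lt, L 0, ..., L (n-1)) is a member of PO_{n,<_1,...,<_n}.\<close>
definition in_PO :: "nat \<Rightarrow> 'a set \<Rightarrow> ('a \<Rightarrow> 'a \<Rightarrow> bool) \<Rightarrow> (nat \<Rightarrow> 'a \<Rightarrow> 'a \<Rightarrow> bool) \<Rightarrow> bool" where
  "in_PO n A lt L \<longleftrightarrow> finite A \<and>
     (\<forall>i<n. strict_linear_on A (L i)) \<and>
     (\<forall>a\<in>A. \<forall>b\<in>A. lt a b \<longleftrightarrow> (\<forall>i<n. L i a b))"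

definition is_embedding ::
  "nat \<Rightarrow> ('a \<Rightarrow> 'b) \<Rightarrow> 'a set \<Rightarrow> ('a \<Rightarrow> 'a \<Rightarrow> bool) \<Rightarrow> (nat \<Rightarrow> 'a \<Rightarrow> 'a \<Rightarrow> bool)
       \<Rightarrow> 'b set \<Rightarrow> ('b \<Rightarrow> 'b \<Rightarrow> bool) \<Rightarrow> (nat \<Rightarrow> 'b \<Rightarrow> 'b \<Rightarrow> bool) \<Rightarrow> bool" where
  "is_embedding n f A ltA LA B ltB LB \<longleftrightarrow>
     inj_on f A \<and> f ` A \<subseteq> B \<and>
     (\<forall>x\<in>A. \<forall>y\<in>A. ltA x y \<longleftrightarrow> ltB (f x) (f y)) \<and>
     (\<forall>i<n. \<forall>x\<in>A. \<forall>y\<in>A. LA i x y \<longleftrightarrow> LB i (f x) (f y))"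

end

theory Submission
  imports Defs
begin

text \<open>Because distinct points of \<open>D\<close> share no coordinate, two of them are below each other in
  the product order iff they are below each other in every coordinate order. Hence an embedding
  into \<open>D\<close> is just a map into \<open>D\<close> that preserves and reflects each coordinate order, and it is
  enough to extend such maps. They extend one point \<open>q\<close> at a time: in coordinate \<open>i\<close> the image
  of \<open>q\<close> must lie above the images of its \<open><\<^sub>i\<close>-predecessors and below those of its
  \<open><\<^sub>i\<close>-successors, which leaves a nonempty open interval, and by density \<open>D\<close> meets the
  product of these \<open>n\<close> intervals.\<close>

definition order_embedding_on :: "'a set \<Rightarrow> ('a \<Rightarrow> 'a \<Rightarrow> bool) \<Rightarrow> ('a \<Rightarrow> 'b::order) \<Rightarrow> bool" where
  "order_embedding_on A r h \<longleftrightarrow> (\<forall>x\<in>A. \<forall>y\<in>A. r x y \<longleftrightarrow> h x < h y)"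

definition coord_embedding ::
  "nat \<Rightarrow> ('a \<Rightarrow> (nat \<Rightarrow> rat)) \<Rightarrow> 'a set \<Rightarrow> (nat \<Rightarrow> 'a \<Rightarrow> 'a \<Rightarrow> bool) \<Rightarrow> (nat \<Rightarrow> rat) set \<Rightarrow> bool"
  where
  "coord_embedding n g A L D \<longleftrightarrow> g ` A \<subseteq> D \<and> (\<forall>i<n. order_embedding_on A (L i) (\<lambda>x. g x i))"

lemma finite_sets_separated_by_interval:
  fixes X Y :: "'a::{linorder, no_top, no_bot} set"
  assumes "finite X" "finite Y" "\<forall>x\<in>X. \<forall>y\<in>Y. x < y"
  shows "\<exists>a b. a < b \<and> (\<forall>x\<in>X. x \<le> a) \<and> (\<forall>y\<in>Y. b \<le> y)"
proof -
  obtain a where a: "\<forall>x\<in>X. x \<le> a" "\<forall>y\<in>Y. a < y"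
  proof (cases "X = {}")
    case True
    obtain a where "a < Min Y" using lt_ex by blast
    with True show ?thesis using assms(2) that by (cases "Y = {}") auto
  next
    case False
    then show ?thesis using assms by (intro that[of "Max X"]) auto
  qed
  obtain b where b: "a < b" "\<forall>y\<in>Y. b \<le> y"
  proof (cases "Y = {}")
    case True
    then show ?thesis using gt_ex that by blast
  next
    case False
    then show ?thesis using a assms(2) by (intro that[of "Min Y"]) auto
  qed
  show ?thesis using a b by blast
qed

lemma order_embedding_on_gap:
  fixes h :: "'a \<Rightarrow> 'b::{linorder, no_top, no_bot}"
  assumes "strict_linear_on Q r" "A \<subseteq> Q" "finite A" "q \<in> Q" "order_embedding_on A r h"
  shows "\<exists>a b. a < b \<and> (\<forall>p\<in>A. r p q \<longrightarrow> h p \<le> a) \<and> (\<forall>p\<in>A. r q p \<longrightarrow> b \<le> h p)"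
proof -
  let ?below = "h ` {p\<in>A. r p q}" and ?above = "h ` {p\<in>A. r q p}"
  have separated: "\<forall>x\<in>?below. \<forall>y\<in>?above. x < y"
  proof (intro ballI)
    fix x y assume "x \<in> ?below" "y \<in> ?above"
    then obtain p p' where p: "p \<in> A" "r p q" "x = h p" and p': "p' \<in> A" "r q p'" "y = h p'"
      by blast
    have "p \<in> Q" "p' \<in> Q" using assms(2) p(1) p'(1) by auto
    then have "r p p'" using assms(1,4) p(2) p'(2) unfolding strict_linear_on_def by blast
    then show "x < y" using assms(5) p p' unfolding order_embedding_on_def by simp
  qed
  have "finite ?below" "finite ?above" using assms(3) by auto
  from finite_sets_separated_by_interval[OF this separated]
  show ?thesis by auto
qed

lemma order_embedding_on_insert:
  assumes "strict_linear_on Q r" "A \<subseteq> Q" "q \<in> Q" "q \<notin> A" "order_embedding_on A r h"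
    and above: "\<forall>p\<in>A. r p q \<longrightarrow> h p < c" and below: "\<forall>p\<in>A. r q p \<longrightarrow> c < h p"
  shows "order_embedding_on (insert q A) r (h(q := c))"
proof -
  have "\<not> r q q" using assms(1,3) unfolding strict_linear_on_def by blast
  moreover have "r p q \<longleftrightarrow> h p < c" "r q p \<longleftrightarrow> c < h p" if "p \<in> A" for p
  proof -
    have "p \<in> Q" "p \<noteq> q" using assms(2,4) \<open>p \<in> A\<close> by auto
    then have "r p q \<or> r q p" using assms(1,3) unfolding strict_linear_on_def by blast
    then show "r p q \<longleftrightarrow> h p < c" "r q p \<longleftrightarrow> c < h p"
      using above below \<open>p \<in> A\<close> by (auto dest: less_asym)
  qed
  ultimately show ?thesis using assms(4,5) unfolding order_embedding_on_def by auto
qed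

lemma coord_embedding_insert:
  assumes dense: "dense_in_Qn n D"
    and lin: "\<forall>i<n. strict_linear_on Q (L i)"
    and "A \<subseteq> Q" "finite A" "q \<in> Q" "q \<notin> A"
    and g: "coord_embedding n g A L D"
  shows "\<exists>g'. coord_embedding n g' (insert q A) L D \<and> (\<forall>x\<in>A. g' x = g x)"
proof -
  have coord: "order_embedding_on A (L i) (\<lambda>x. g x i)" if "i < n" for i
    using g that unfolding coord_embedding_def by blast
  have "\<exists>a b. a < b \<and> (\<forall>p\<in>A. L i p q \<longrightarrow> g p i \<le> a) \<and> (\<forall>p\<in>A. L i q p \<longrightarrow> b \<le> g p i)"
    if "i < n" for i
    using order_embedding_on_gap[OF lin[rule_format, OF that] assms(3-5) coord[OF that]] .
  then obtain lo hi where gap: "\<And>i. i < n \<Longrightarrow> lo i < hi i \<and> (\<forall>p\<in>A. L i p q \<longrightarrow> g p i \<le> lo i)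
      \<and> (\<forall>p\<in>A. L i q p \<longrightarrow> hi i \<le> g p i)"
    by metis
  then obtain d where d: "d \<in> D" "\<And>i. i < n \<Longrightarrow> lo i < d i \<and> d i < hi i"
    using dense[unfolded dense_in_Qn_def, rule_format, of lo hi] by blast
  have "order_embedding_on (insert q A) (L i) (\<lambda>x. (g(q := d)) x i)" if "i < n" for i
  proof -
    have "order_embedding_on (insert q A) (L i) ((\<lambda>x. g x i)(q := d i))"
    proof (rule order_embedding_on_insert[OF lin[rule_format, OF that] assms(3,5,6) coord[OF that]])
      show "\<forall>p\<in>A. L i p q \<longrightarrow> g p i < d i" and "\<forall>p\<in>A. L i q p \<longrightarrow> d i < g p i"
        using gap[OF that] d(2)[OF that] by fastforce+
    qed
    moreover have "(\<lambda>x. g x i)(q := d i) = (\<lambda>x. (g(q := d)) x i)" by auto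
    ultimately show ?thesis by simp
  qed
  moreover have "(g(q := d)) ` insert q A \<subseteq> D" using g d(1) \<open>q \<notin> A\<close>
    unfolding coord_embedding_def by auto
  ultimately have "coord_embedding n (g(q := d)) (insert q A) L D"
    unfolding coord_embedding_def by blast
  then show ?thesis using \<open>q \<notin> A\<close> by (intro exI[of _ "g(q := d)"]) auto
qed

lemma coord_embedding_extend:
  assumes dense: "dense_in_Qn n D"
    and lin: "\<forall>i<n. strict_linear_on Q (L i)"
    and "finite Q" "P \<subseteq> Q"
    and f: "coord_embedding n f P L D"
  shows "\<exists>g. coord_embedding n g Q L D \<and> (\<forall>x\<in>P. g x = f x)"
proof -
  have "\<exists>g. coord_embedding n g (P \<union> F) L D \<and> (\<forall>x\<in>P. g x = f x)" if "finite F" "F \<subseteq> Q" for F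
    using that
  proof (induction F rule: finite_induct)
    case empty
    then show ?case using f by auto
  next
    case (insert q F)
    then obtain g where g: "coord_embedding n g (P \<union> F) L D" "\<forall>x\<in>P. g x = f x" by auto
    show ?case
    proof (cases "q \<in> P \<union> F")
      case True
      then show ?thesis using g by (auto simp: insert_absorb)
    next
      case False
      have "finite (P \<union> F)" using \<open>finite Q\<close> \<open>P \<subseteq> Q\<close> insert.hyps(1) finite_subset by blast
      then show ?thesis
        using coord_embedding_insert[OF dense lin, of "P \<union> F" q g] \<open>P \<subseteq> Q\<close> insert.prems g False
        by auto
    qed
  qed
  from this[OF \<open>finite Q\<close>] show ?thesis using \<open>P \<subseteq> Q\<close> by (simp add: sup_absorb2)
qed

lemma prod_less_iff_coord_less:
  assumes "no_common_coord n D" "a \<in> D" "b \<in> D" "0 < n"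
  shows "prod_less n a b \<longleftrightarrow> (\<forall>i<n. a i < b i)"
  using assms unfolding prod_less_def no_common_coord_def by (auto simp: order_le_less)

lemma coord_embedding_imp_embedding:
  assumes "0 < n" "no_common_coord n D" "in_PO n Q lt L"
    and g: "coord_embedding n g Q L D"
  shows "is_embedding n g Q lt L D (prod_less n) coord_less"
proof -
  have gD: "g ` Q \<subseteq> D" and gL: "\<forall>i<n. \<forall>x\<in>Q. \<forall>y\<in>Q. L i x y \<longleftrightarrow> g x i < g y i"
    using g unfolding coord_embedding_def order_embedding_on_def by auto
  have "inj_on g Q"
  proof (rule inj_onI)
    fix x y assume "x \<in> Q" "y \<in> Q" "g x = g y"
    then have "\<not> L 0 x y" "\<not> L 0 y x" using gL assms(1) by auto
    then show "x = y"
      using assms(1,3) \<open>x \<in> Q\<close> \<open>y \<in> Q\<close> unfolding in_PO_def strict_linear_on_def by blast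
  qed
  moreover have "\<forall>x\<in>Q. \<forall>y\<in>Q. lt x y \<longleftrightarrow> prod_less n (g x) (g y)"
  proof (intro ballI)
    fix x y assume "x \<in> Q" "y \<in> Q"
    moreover from this have "prod_less n (g x) (g y) \<longleftrightarrow> (\<forall>i<n. g x i < g y i)"
      using gD prod_less_iff_coord_less[OF assms(2) _ _ assms(1)] by blast
    ultimately show "lt x y \<longleftrightarrow> prod_less n (g x) (g y)"
      using assms(3) gL unfolding in_PO_def by auto
  qed
  ultimately show ?thesis using gD gL unfolding is_embedding_def coord_less_def by blast
qed

theorem lemma3p1:
  fixes n :: nat and D :: "(nat \<Rightarrow> rat) set"
    and P Q :: "'a set" and lt :: "'a \<Rightarrow> 'a \<Rightarrow> bool" and L :: "nat \<Rightarrow> 'a \<Rightarrow> 'a \<Rightarrow> bool"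
    and f :: "'a \<Rightarrow> (nat \<Rightarrow> rat)"
  assumes "n \<ge> 2"
    and "D \<subseteq> rat_space n"
    and "dense_in_Qn n D"
    and "no_common_coord n D"
    and "in_PO n Q lt L"
    and "P \<subseteq> Q"
    and "is_embedding n f P lt L D (prod_less n) coord_less"
  shows "\<exists>g. is_embedding n g Q lt L D (prod_less n) coord_less \<and> (\<forall>x\<in>P. g x = f x)"
proof -
  \<comment> \<open>Of the hypotheses on \<open>n\<close> and \<open>D\<close>, only \<open>0 < n\<close>, density and distinct coordinates are used.\<close>
  have "coord_embedding n f P L D"
    using assms(7) unfolding is_embedding_def coord_embedding_def order_embedding_on_def coord_less_def
    by auto
  then obtain g where "coord_embedding n g Q L D" "\<forall>x\<in>P. g x = f x"
    using coord_embedding_extend[OF assms(3) _ _ assms(6)] assms(5) unfolding in_PO_def by blast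
  moreover have "0 < n" using assms(1) by simp
  ultimately show ?thesis using coord_embedding_imp_embedding assms(4,5) by blast
qed

end
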